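(* Every finitely generated co-Heyting algebra is precompact. Every finitely presented co-Heyting algebra is precompact and Hausdorff.
   Context: A co-Heyting algebra is a bounded distributive lattice $(L,0,1,\vee,\wedge)$ such that $a-b=\min\{c\in L: a\le b\vee c\}$ exists for all $a,b$ (finitely generated/presented in the language $\{0,1,\vee,\wedge,-\}$). For an ideal $I$, $L/I$ is the quotient by $a\equiv_I b\iff(a-b)\vee(b-a)\in I$. $\operatorname{Spec}L$ is the set of prime filters ordered by inclusion; height = foundation rank there; $\operatorname{codim}_La=\min\{\operatorname{height}\mathfrak p: a\in\mathfrak p\}$ ($+\infty$ if none); $dL=\{a:\operatorname{codim}_La\ge d\}$ is an ideal. $L$ is Hausdorff if every nonzero element has finite codimension; $L$ is precompact if $L/dL$ is finite for every positive integer $d$. *)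

theory Defs
  imports Main "HOL-Library.Extended_Nat"
begin

definition co_heyting :: "'a::{bounded_lattice,distrib_lattice} itself \<Rightarrow> bool" where
  "co_heyting _ \<longleftrightarrow>
     (\<forall>a b::'a. \<exists>c. a \<le> sup b c \<and> (\<forall>d. a \<le> sup b d \<longrightarrow> c \<le> d))"

definition cdiff :: "'a::{bounded_lattice,distrib_lattice} \<Rightarrow> 'a \<Rightarrow> 'a" where
  "cdiff a b = (LEAST c. a \<le> sup b c)"

inductive_set gen :: "'a::{bounded_lattice,distrib_lattice} set \<Rightarrow> 'a set" for S where
  gen_base: "x \<in> S \<Longrightarrow> x \<in> gen S"
| gen_bot: "bot \<in> gen S"
| gen_top: "top \<in> gen S"
| gen_sup: "x \<in> gen S \<Longrightarrow> y \<in> gen S \<Longrightarrow> sup x y \<in> gen S"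
| gen_inf: "x \<in> gen S \<Longrightarrow> y \<in> gen S \<Longrightarrow> inf x y \<in> gen S"
| gen_diff: "x \<in> gen S \<Longrightarrow> y \<in> gen S \<Longrightarrow> cdiff x y \<in> gen S"

definition fin_gen :: "'a::{bounded_lattice,distrib_lattice} itself \<Rightarrow> bool" where
  "fin_gen _ \<longleftrightarrow> (\<exists>S::'a set. finite S \<and> gen S = UNIV)"

datatype trm = Var nat | Zero | One | Join trm trm | Meet trm trm | Minus trm trm

primrec tvars :: "trm \<Rightarrow> nat set" where
  "tvars (Var v) = {v}"
| "tvars Zero = {}"
| "tvars One = {}"
| "tvars (Join s t) = tvars s \<union> tvars t"
| "tvars (Meet s t) = tvars s \<union> tvars t"
| "tvars (Minus s t) = tvars s \<union> tvars t"

primrec teval :: "(nat \<Rightarrow> 'a::{bounded_lattice,distrib_lattice}) \<Rightarrow> trm \<Rightarrow> 'a" where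
  "teval g (Var v) = g v"
| "teval g Zero = bot"
| "teval g One = top"
| "teval g (Join s t) = sup (teval g s) (teval g t)"
| "teval g (Meet s t) = inf (teval g s) (teval g t)"
| "teval g (Minus s t) = cdiff (teval g s) (teval g t)"

text \<open>Equational consequence in the variety of co-Heyting algebras
  (equational logic over the standard equational basis: bounded distributive
  lattice laws plus the duals of the Heyting algebra axioms), from the
  relations R between the generators.\<close>
inductive deriv :: "(trm \<times> trm) set \<Rightarrow> trm \<Rightarrow> trm \<Rightarrow> bool" for R where
  d_rel: "(s, t) \<in> R \<Longrightarrow> deriv R s t"
| d_refl: "deriv R t t"
| d_sym: "deriv R s t \<Longrightarrow> deriv R t s"
| d_trans: "deriv R s t \<Longrightarrow> deriv R t u \<Longrightarrow> deriv R s u"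
| d_cjoin: "deriv R s s' \<Longrightarrow> deriv R t t' \<Longrightarrow> deriv R (Join s t) (Join s' t')"
| d_cmeet: "deriv R s s' \<Longrightarrow> deriv R t t' \<Longrightarrow> deriv R (Meet s t) (Meet s' t')"
| d_cminus: "deriv R s s' \<Longrightarrow> deriv R t t' \<Longrightarrow> deriv R (Minus s t) (Minus s' t')"
| a_join_assoc: "deriv R (Join (Join x y) z) (Join x (Join y z))"
| a_join_comm: "deriv R (Join x y) (Join y x)"
| a_meet_assoc: "deriv R (Meet (Meet x y) z) (Meet x (Meet y z))"
| a_meet_comm: "deriv R (Meet x y) (Meet y x)"
| a_absorb1: "deriv R (Join x (Meet x y)) x"
| a_absorb2: "deriv R (Meet x (Join x y)) x"
| a_zero: "deriv R (Join x Zero) x"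
| a_one: "deriv R (Meet x One) x"
| a_distrib: "deriv R (Meet x (Join y z)) (Join (Meet x y) (Meet x z))"
| a_minus_self: "deriv R (Minus x x) Zero"
| a_minus1: "deriv R (Join x (Minus y x)) (Join x y)"
| a_minus2: "deriv R (Join y (Minus y x)) y"
| a_minus3: "deriv R (Minus (Join y z) x) (Join (Minus y x) (Minus z x))"

text \<open>L is finitely presented: generated by g 0, ..., g (n-1), subject to a finite
  set R of relations which hold in L and from which every relation between the
  generators holding in L follows (so L is isomorphic to F_n / theta(R)).\<close>
definition fin_pres :: "'a::{bounded_lattice,distrib_lattice} itself \<Rightarrow> bool" where
  "fin_pres _ \<longleftrightarrow> (\<exists>(n::nat) (g::nat \<Rightarrow> 'a) R.
      finite R \<and>
      (\<forall>(s, t) \<in> R. tvars s \<union> tvars t \<subseteq> {..<n}) \<and>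
      gen (g ` {..<n}) = UNIV \<and>
      (\<forall>(s, t) \<in> R. teval g s = teval g t) \<and>
      (\<forall>s t. tvars s \<subseteq> {..<n} \<longrightarrow> tvars t \<subseteq> {..<n} \<longrightarrow>
             teval g s = teval g t \<longrightarrow> deriv R s t))"

definition prime_filter :: "'a::{bounded_lattice,distrib_lattice} set \<Rightarrow> bool" where
  "prime_filter F \<longleftrightarrow>
     top \<in> F \<and> bot \<notin> F \<and>
     (\<forall>a b. a \<in> F \<longrightarrow> a \<le> b \<longrightarrow> b \<in> F) \<and>
     (\<forall>a b. a \<in> F \<longrightarrow> b \<in> F \<longrightarrow> inf a b \<in> F) \<and>
     (\<forall>a b. sup a b \<in> F \<longrightarrow> a \<in> F \<or> b \<in> F)"

definition Spec :: "'a::{bounded_lattice,distrib_lattice} set set" where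
  "Spec = {F. prime_filter F}"

text \<open>Foundation rank in (Spec, \<subseteq>), valued in enat: height p \<ge> k iff there is a
  strict chain q_0 \<subset> ... \<subset> q_k = p in Spec (infinite ranks / ill-founded
  elements give \<infinity>).\<close>
definition height :: "'a::{bounded_lattice,distrib_lattice} set \<Rightarrow> enat" where
  "height p = Sup {enat k | k. \<exists>q::nat \<Rightarrow> 'a set. q k = p \<and>
       (\<forall>i\<le>k. q i \<in> Spec) \<and> (\<forall>i<k. q i \<subset> q (Suc i))}"

definition codim :: "'a::{bounded_lattice,distrib_lattice} \<Rightarrow> enat" where
  "codim a = Inf {height p | p. p \<in> Spec \<and> a \<in> p}"

definition dideal :: "nat \<Rightarrow> 'a::{bounded_lattice,distrib_lattice} set" where
  "dideal d = {a. codim a \<ge> enat d}"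

definition qrel :: "'a::{bounded_lattice,distrib_lattice} set \<Rightarrow> ('a \<times> 'a) set" where
  "qrel I = {(a, b). sup (cdiff a b) (cdiff b a) \<in> I}"

definition quot :: "'a::{bounded_lattice,distrib_lattice} set \<Rightarrow> 'a set set" where
  "quot I = UNIV // qrel I"

definition precompact :: "'a::{bounded_lattice,distrib_lattice} itself \<Rightarrow> bool" where
  "precompact _ \<longleftrightarrow> (\<forall>d::nat. d > 0 \<longrightarrow> finite (quot (dideal d :: 'a set)))"

definition hausdorff :: "'a::{bounded_lattice,distrib_lattice} itself \<Rightarrow> bool" where
  "hausdorff _ \<longleftrightarrow> (\<forall>a::'a. a \<noteq> bot \<longrightarrow> codim a \<noteq> \<infinity>)"

end

theory Submission
  imports Defs
begin

text \<open>A prime filter \<open>p\<close> contains \<open>a - b\<close> iff some prime filter \<open>q \<subseteq> p\<close> contains \<open>a\<close>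
  but not \<open>b\<close>. Hence, if \<open>L\<close> is generated by a finite set \<open>S\<close>, a prime filter is determined
  by its trace on \<open>S\<close> and the prime filters strictly below it; by induction on \<open>d\<close> there are
  only finitely many prime filters of height \<open>< d\<close>, and as \<open>a \<equiv> b\<close> modulo \<open>dL\<close> iff \<open>a\<close>
  and \<open>b\<close> lie in the same ones of them, \<open>L/dL\<close> is finite.

  If \<open>L\<close> is finitely presented and \<open>a \<noteq> 0\<close>, evaluate the presentation in the finite
  sublattice \<open>D\<close> spanned by the values of the subterms of the relations and of a term for
  \<open>a\<close>, computing differences inside \<open>D\<close>. The relations still hold there, which yields a
  join-preserving map \<open>f : L \<rightarrow> D\<close> with \<open>f a = a\<close> that kills \<open>x - y\<close> whenever
  \<open>f x = f y\<close>. A prime filter containing \<open>a\<close> and missing the kernel of \<open>f\<close> exists, and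
  every strict chain of prime filters below it is mapped injectively into the power set of
  \<open>D\<close> by taking images; so its height, and hence \<open>codim a\<close>, is finite.\<close>

lemma
  assumes "co_heyting TYPE('a::{bounded_lattice,distrib_lattice})"
  shows le_sup_cdiff: "(a::'a) \<le> sup b (cdiff a b)"
    and cdiff_le: "a \<le> sup b c \<Longrightarrow> cdiff a b \<le> c"
proof -
  from assms obtain c0 where c0: "a \<le> sup b c0" "\<forall>d. a \<le> sup b d \<longrightarrow> c0 \<le> d"
    unfolding co_heyting_def by blast
  then have "cdiff a b = c0"
    unfolding cdiff_def by (intro Least_equality) auto
  with c0 show "a \<le> sup b (cdiff a b)" and "a \<le> sup b c \<Longrightarrow> cdiff a b \<le> c"
    by simp_all
qed

lemma prime_filter_up: "prime_filter p \<Longrightarrow> a \<in> p \<Longrightarrow> a \<le> b \<Longrightarrow> b \<in> p"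
  unfolding prime_filter_def by blast

lemma prime_filter_sup_iff: "prime_filter p \<Longrightarrow> sup a b \<in> p \<longleftrightarrow> a \<in> p \<or> b \<in> p"
  unfolding prime_filter_def by (meson sup_ge1 sup_ge2)

lemma prime_filter_inf_iff: "prime_filter p \<Longrightarrow> inf a b \<in> p \<longleftrightarrow> a \<in> p \<and> b \<in> p"
  unfolding prime_filter_def by (meson inf_le1 inf_le2)

lemma prime_filter_bot: "prime_filter p \<Longrightarrow> bot \<notin> p"
  unfolding prime_filter_def by blast

lemma prime_filter_top: "prime_filter p \<Longrightarrow> top \<in> p"
  unfolding prime_filter_def by blast

definition lattice_filter :: "'a::lattice set \<Rightarrow> bool" where
  "lattice_filter F \<longleftrightarrow> F \<noteq> {} \<and> (\<forall>a b. a \<in> F \<longrightarrow> a \<le> b \<longrightarrow> b \<in> F) \<and>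
     (\<forall>a b. a \<in> F \<longrightarrow> b \<in> F \<longrightarrow> inf a b \<in> F)"

definition lattice_ideal :: "'a::bounded_lattice set \<Rightarrow> bool" where
  "lattice_ideal J \<longleftrightarrow> bot \<in> J \<and> (\<forall>a b. b \<in> J \<longrightarrow> a \<le> b \<longrightarrow> a \<in> J) \<and>
     (\<forall>a b. a \<in> J \<longrightarrow> b \<in> J \<longrightarrow> sup a b \<in> J)"

lemma lattice_filter_principal: "lattice_filter {x. a \<le> x}"
  unfolding lattice_filter_def by auto

lemma sup_hom_mono:
  fixes f :: "'a::lattice \<Rightarrow> 'b::lattice"
  assumes "\<And>x y. f (sup x y) = sup (f x) (f y)" "x \<le> y"
  shows "f x \<le> f y"
proof -
  have "f y = sup (f x) (f y)" using assms(1)[of x y] assms(2) by (simp add: sup.absorb2)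
  then show ?thesis using sup.cobounded1[of "f x" "f y"] by simp
qed

lemma lattice_ideal_kernel:
  fixes f :: "'a::bounded_lattice \<Rightarrow> 'b::bounded_lattice"
  assumes "f bot = bot" "\<And>x y. f (sup x y) = sup (f x) (f y)"
  shows "lattice_ideal {x. f x = bot}"
proof -
  have "f a = bot" if "f b = bot" "a \<le> b" for a b
    using sup_hom_mono[of f, OF assms(2) that(2)] that(1) by (simp add: bot_unique)
  then show ?thesis using assms unfolding lattice_ideal_def by auto
qed

lemma ex_maximal_filter_disjoint:
  fixes F J :: "'a::lattice set"
  assumes "lattice_filter F" "F \<inter> J = {}"
  shows "\<exists>M. lattice_filter M \<and> F \<subseteq> M \<and> M \<inter> J = {} \<and>
    (\<forall>G. lattice_filter G \<and> M \<subseteq> G \<and> G \<inter> J = {} \<longrightarrow> G = M)"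
proof -
  define A where "A = {G. lattice_filter G \<and> F \<subseteq> G \<and> G \<inter> J = {}}"
  have "\<exists>U\<in>A. \<forall>X\<in>C. X \<subseteq> U" if C: "C \<in> chains A" for C
  proof (cases "C = {}")
    case True
    then show ?thesis using assms unfolding A_def by blast
  next
    case False
    have filters: "lattice_filter G" if "G \<in> C" for G
      using chainsD2[OF C] that unfolding A_def by blast
    have inf_closed: "inf a b \<in> \<Union>C" if ab: "a \<in> \<Union>C" "b \<in> \<Union>C" for a b
    proof -
      obtain G1 G2 where G: "G1 \<in> C" "G2 \<in> C" "a \<in> G1" "b \<in> G2"
        using ab by blast
      then have "G1 \<subseteq> G2 \<or> G2 \<subseteq> G1" using C chainsD by blast
      then obtain G where "G \<in> C" "a \<in> G" "b \<in> G" using G by blast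
      then show ?thesis using filters[of G] unfolding lattice_filter_def by blast
    qed
    have up_closed: "b \<in> \<Union>C" if "a \<in> \<Union>C" "a \<le> b" for a b
    proof -
      obtain G where "G \<in> C" "a \<in> G" using \<open>a \<in> \<Union>C\<close> by blast
      then show ?thesis using filters[of G] \<open>a \<le> b\<close> unfolding lattice_filter_def by blast
    qed
    have "F \<subseteq> \<Union>C" "\<Union>C \<inter> J = {}"
      using False chainsD2[OF C] unfolding A_def by blast+
    moreover have "\<Union>C \<noteq> {}"
      using \<open>F \<subseteq> \<Union>C\<close> assms(1) unfolding lattice_filter_def by (metis subset_empty)
    ultimately have "\<Union>C \<in> A"
      using inf_closed up_closed unfolding A_def lattice_filter_def by simp
    then show ?thesis by blast
  qed
  then obtain M where "M \<in> A" "\<forall>X\<in>A. M \<subseteq> X \<longrightarrow> X = M"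
    using Zorn_Lemma2[of A] by blast
  then show ?thesis unfolding A_def by (intro exI[of _ M]) auto
qed

lemma maximal_filter_disjoint_meets:
  fixes M J :: "'a::lattice set"
  assumes M: "lattice_filter M" and "a \<notin> M"
    and max: "\<forall>G. lattice_filter G \<and> M \<subseteq> G \<and> G \<inter> J = {} \<longrightarrow> G = M"
  shows "\<exists>g\<in>M. \<exists>j\<in>J. inf g a \<le> j"
proof (rule ccontr)
  assume none: "\<not> ?thesis"
  define G where "G = {x. \<exists>g\<in>M. inf g a \<le> x}"
  have inf_closed: "inf x y \<in> G" if "x \<in> G" "y \<in> G" for x y
  proof -
    obtain g1 g2 where "g1 \<in> M" "g2 \<in> M" "inf g1 a \<le> x" "inf g2 a \<le> y"
      using \<open>x \<in> G\<close> \<open>y \<in> G\<close> unfolding G_def by blast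
    moreover have "inf (inf g1 g2) a \<le> inf x y"
      using calculation by (meson inf.cobounded1 inf.cobounded2 le_inf_iff order_trans)
    ultimately show ?thesis unfolding G_def using M by (auto simp: lattice_filter_def)
  qed
  have up_closed: "y \<in> G" if "x \<in> G" "x \<le> y" for x y
  proof -
    obtain g where "g \<in> M" "inf g a \<le> x" using \<open>x \<in> G\<close> unfolding G_def by blast
    then show ?thesis using \<open>x \<le> y\<close> unfolding G_def by (blast dest: order_trans)
  qed
  have "M \<subseteq> G"
    unfolding G_def using inf_le1 by blast
  have "a \<in> G"
    using M inf_le2 unfolding G_def lattice_filter_def by blast
  have "lattice_filter G"
    using inf_closed up_closed \<open>a \<in> G\<close> unfolding lattice_filter_def by blast
  moreover have "G \<inter> J = {}"
    using none unfolding G_def by blast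
  ultimately show False using max \<open>M \<subseteq> G\<close> \<open>a \<in> G\<close> \<open>a \<notin> M\<close> by blast
qed

text \<open>If \<open>sup a b\<close> lies in a maximal filter missing the ideal but \<open>a\<close> and \<open>b\<close> do not,
  distributivity forces \<open>sup a b\<close>, cut down by a suitable element of the filter, into the
  ideal.\<close>

lemma maximal_filter_disjoint_prime:
  fixes M J :: "'a::{bounded_lattice,distrib_lattice} set"
  assumes M: "lattice_filter M" and J: "lattice_ideal J" and MJ: "M \<inter> J = {}"
    and max: "\<forall>G. lattice_filter G \<and> M \<subseteq> G \<and> G \<inter> J = {} \<longrightarrow> G = M"
  shows "prime_filter M"
proof -
  have "a \<in> M \<or> b \<in> M" if ab: "sup a b \<in> M" for a b
  proof (rule ccontr)
    assume "\<not> (a \<in> M \<or> b \<in> M)"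
    then obtain g1 j1 g2 j2 where g: "g1 \<in> M" "j1 \<in> J" "inf g1 a \<le> j1"
      "g2 \<in> M" "j2 \<in> J" "inf g2 b \<le> j2"
      using maximal_filter_disjoint_meets[OF M _ max] by meson
    define g where "g = inf g1 g2"
    have "inf g (sup a b) \<in> M" using M g ab unfolding g_def lattice_filter_def by blast
    moreover have "inf g (sup a b) = sup (inf g a) (inf g b)" by (rule inf_sup_distrib1)
    moreover have "sup (inf g a) (inf g b) \<le> sup j1 j2" unfolding g_def using g
      by (meson inf.cobounded1 inf.cobounded2 le_infI le_infI1 le_infI2 order_trans sup.mono)
    moreover have "sup j1 j2 \<in> J" using J g unfolding lattice_ideal_def by blast
    ultimately show False using MJ J unfolding lattice_ideal_def by (metis disjoint_iff)
  qed
  moreover have "top \<in> M" using M unfolding lattice_filter_def by auto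
  moreover have "bot \<notin> M" using MJ J unfolding lattice_ideal_def by blast
  ultimately show ?thesis using M unfolding prime_filter_def lattice_filter_def by blast
qed

lemma prime_filter_separation:
  fixes F J :: "'a::{bounded_lattice,distrib_lattice} set"
  assumes "lattice_filter F" "lattice_ideal J" "F \<inter> J = {}"
  shows "\<exists>p. prime_filter p \<and> F \<subseteq> p \<and> p \<inter> J = {}"
  using ex_maximal_filter_disjoint[OF assms(1,3)] maximal_filter_disjoint_prime[OF _ assms(2)]
  by blast

lemma lattice_ideal_below_sup_outside:
  assumes "prime_filter p"
  shows "lattice_ideal {x. \<exists>y. y \<notin> p \<and> x \<le> sup b y}"
  unfolding lattice_ideal_def
proof (intro conjI allI impI)
  show "bot \<in> {x. \<exists>y. y \<notin> p \<and> x \<le> sup b y}"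
    using prime_filter_bot[OF assms] by auto
  show "a \<in> {x. \<exists>y. y \<notin> p \<and> x \<le> sup b y}"
    if "c \<in> {x. \<exists>y. y \<notin> p \<and> x \<le> sup b y}" "a \<le> c" for a c
    using that order_trans by blast
  show "sup a c \<in> {x. \<exists>y. y \<notin> p \<and> x \<le> sup b y}"
    if ac: "a \<in> {x. \<exists>y. y \<notin> p \<and> x \<le> sup b y}" "c \<in> {x. \<exists>y. y \<notin> p \<and> x \<le> sup b y}"
    for a c
  proof -
    obtain y1 y2 where y: "y1 \<notin> p" "a \<le> sup b y1" "y2 \<notin> p" "c \<le> sup b y2"
      using ac by blast
    have "sup y1 y2 \<notin> p"
      using y prime_filter_sup_iff[OF assms] by blast
    moreover have "sup a c \<le> sup b (sup y1 y2)"
      using y by (meson order_trans sup_ge1 sup_ge2 sup_mono le_supI)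
    ultimately show ?thesis by blast
  qed
qed

lemma cdiff_mem_prime_filter_iff:
  assumes CH: "co_heyting TYPE('a::{bounded_lattice,distrib_lattice})"
    and p: "prime_filter (p::'a set)"
  shows "cdiff a b \<in> p \<longleftrightarrow> (\<exists>q. prime_filter q \<and> q \<subseteq> p \<and> a \<in> q \<and> b \<notin> q)"
proof
  assume "\<exists>q. prime_filter q \<and> q \<subseteq> p \<and> a \<in> q \<and> b \<notin> q"
  then obtain q where q: "prime_filter q" "q \<subseteq> p" "a \<in> q" "b \<notin> q" by blast
  have "sup b (cdiff a b) \<in> q"
    using prime_filter_up[OF q(1) q(3) le_sup_cdiff[OF CH]] .
  then show "cdiff a b \<in> p" using q prime_filter_sup_iff by blast
next
  assume ab: "cdiff a b \<in> p"
  define J where "J = {x. \<exists>y. y \<notin> p \<and> x \<le> sup b y}"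
  have "{x. a \<le> x} \<inter> J = {}"
  proof (rule ccontr)
    assume "{x. a \<le> x} \<inter> J \<noteq> {}"
    then obtain y where "y \<notin> p" "a \<le> sup b y" unfolding J_def using order_trans by blast
    then show False using cdiff_le[OF CH] prime_filter_up[OF p ab] by blast
  qed
  then obtain q where q: "prime_filter q" "{x. a \<le> x} \<subseteq> q" "q \<inter> J = {}"
    using prime_filter_separation[OF lattice_filter_principal]
      lattice_ideal_below_sup_outside[OF p] unfolding J_def by blast
  have "x \<in> J" if "x \<notin> p" for x
    unfolding J_def using that sup_ge2 by blast
  moreover have "b \<in> J"
    unfolding J_def using prime_filter_bot[OF p] by (auto intro!: exI[of _ bot])
  ultimately show "\<exists>q. prime_filter q \<and> q \<subseteq> p \<and> a \<in> q \<and> b \<notin> q"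
    using q by blast
qed

definition chain_lengths :: "'a::{bounded_lattice,distrib_lattice} set \<Rightarrow> nat set" where
  "chain_lengths p = {k. \<exists>q::nat \<Rightarrow> 'a set. q k = p \<and> (\<forall>i\<le>k. q i \<in> Spec) \<and>
     (\<forall>i<k. q i \<subset> q (Suc i))}"

lemma height_eq_Sup_chain_lengths: "height p = Sup (enat ` chain_lengths p)"
  unfolding height_def chain_lengths_def by (rule arg_cong[where f = Sup]) blast

lemma height_le_enat_iff: "height p \<le> enat N \<longleftrightarrow> (\<forall>k\<in>chain_lengths p. k \<le> N)"
  by (simp add: height_eq_Sup_chain_lengths Sup_le_iff)

lemma zero_in_chain_lengths: "prime_filter p \<Longrightarrow> 0 \<in> chain_lengths p"
  unfolding chain_lengths_def Spec_def by (auto intro!: exI[of _ "\<lambda>_. p"])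

lemma Suc_in_chain_lengths:
  assumes "prime_filter p" "q \<subset> p" "k \<in> chain_lengths q"
  shows "Suc k \<in> chain_lengths p"
proof -
  obtain c where c: "c k = q" "\<forall>i\<le>k. c i \<in> Spec" "\<forall>i<k. c i \<subset> c (Suc i)"
    using assms(3) unfolding chain_lengths_def by blast
  define c' where "c' i = (if i \<le> k then c i else p)" for i
  have "\<forall>i\<le>Suc k. c' i \<in> Spec"
    using c(2) assms(1) by (auto simp: c'_def Spec_def le_Suc_eq)
  moreover have "c' i \<subset> c' (Suc i)" if "i < Suc k" for i
    using that c(1,3) assms(2) by (auto simp: c'_def less_Suc_eq)
  ultimately show ?thesis
    unfolding chain_lengths_def by (intro CollectI exI[of _ c']) (simp add: c'_def)
qed

lemma psubset_of_chain:
  assumes "\<forall>i<k. c i \<subset> c (Suc i)" "i < j" "j \<le> k"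
  shows "c i \<subset> c j"
  using assms(2,3)
proof (induction j)
  case (Suc j)
  then have step: "c j \<subset> c (Suc j)" using assms(1) by simp
  show ?case
  proof (cases "i = j")
    case True
    then show ?thesis using step by simp
  next
    case False
    then have "c i \<subset> c j" using Suc by simp
    then show ?thesis using step by (rule psubset_trans)
  qed
qed simp

lemma height_mono:
  assumes "prime_filter p" "q \<subseteq> p"
  shows "height q \<le> height p"
  unfolding height_eq_Sup_chain_lengths
proof (rule Sup_mono)
  fix h assume "h \<in> enat ` chain_lengths q"
  then obtain k where k: "k \<in> chain_lengths q" "h = enat k" by blast
  show "\<exists>h'\<in>enat ` chain_lengths p. h \<le> h'"
  proof (cases "q = p")
    case True
    then show ?thesis using k by blast
  next
    case False
    then have "Suc k \<in> chain_lengths p"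
      using Suc_in_chain_lengths[OF assms(1) _ k(1)] assms(2) by blast
    then show ?thesis using k by (intro bexI[of _ "enat (Suc k)"]) auto
  qed
qed

lemma eSuc_height_le:
  assumes "prime_filter q" "prime_filter p" "q \<subset> p"
  shows "eSuc (height q) \<le> height p"
proof -
  have "eSuc (height q) = Sup (eSuc ` enat ` chain_lengths q)"
    unfolding height_eq_Sup_chain_lengths
    using zero_in_chain_lengths[OF assms(1)] by (intro eSuc_Sup) blast
  also have "\<dots> \<le> height p"
    unfolding height_eq_Sup_chain_lengths
    using Suc_in_chain_lengths[OF assms(2,3)] by (intro Sup_mono) (auto simp: eSuc_enat)
  finally show ?thesis .
qed

section \<open>Precompactness of finitely generated algebras\<close>

lemma gen_mem_prime_filter_iff:
  assumes CH: "co_heyting TYPE('a::{bounded_lattice,distrib_lattice})"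
    and p: "prime_filter (p::'a set)" and p': "prime_filter p'"
    and trace: "p \<inter> S = p' \<inter> S"
    and below: "{q. prime_filter q \<and> q \<subset> p} = {q. prime_filter q \<and> q \<subset> p'}"
    and "x \<in> gen S"
  shows "x \<in> p \<longleftrightarrow> x \<in> p'"
  using \<open>x \<in> gen S\<close>
proof induction
  case (gen_diff x y)
  have split: "cdiff x y \<in> r \<longleftrightarrow> (x \<in> r \<and> y \<notin> r) \<or>
      (\<exists>q\<in>{q. prime_filter q \<and> q \<subset> r}. x \<in> q \<and> y \<notin> q)" if "prime_filter r" for r
    using cdiff_mem_prime_filter_iff[OF CH that] that by (auto simp: subset_iff_psubset_eq)
  show ?case
    using split[OF p] split[OF p'] below gen_diff.IH by simp
qed (use trace p p' prime_filter_bot prime_filter_top prime_filter_sup_iff prime_filter_inf_iff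
  in blast)+

lemma finite_prime_filters_height_less:
  assumes CH: "co_heyting TYPE('a::{bounded_lattice,distrib_lattice})"
    and "finite S" and S: "gen S = (UNIV::'a set)"
  shows "finite {p::'a set. prime_filter p \<and> height p < enat d}"
proof (induction d)
  case 0
  then show ?case by (simp add: zero_enat_def[symmetric])
next
  case (Suc d)
  define A where "A = {p::'a set. prime_filter p \<and> height p < enat (Suc d)}"
  define key where "key p = (p \<inter> S, {q. prime_filter q \<and> q \<subset> p})" for p :: "'a set"
  have inj: "inj_on key A"
  proof
    fix p p' assume "p \<in> A" "p' \<in> A" "key p = key p'"
    then have "x \<in> p \<longleftrightarrow> x \<in> p'" for x
      using gen_mem_prime_filter_iff[OF CH, of p p' S x] S unfolding A_def key_def by auto
    then show "p = p'" by blast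
  qed
  have lower: "height q < enat d" if "prime_filter q" "q \<subset> p" "p \<in> A" for p q
  proof -
    have "eSuc (height q) < eSuc (enat d)"
      using eSuc_height_le[OF that(1) _ that(2)] that(3) unfolding A_def
      by (simp add: eSuc_enat order_le_less_trans)
    then show ?thesis by simp
  qed
  have "key p \<in> Pow S \<times> Pow {p. prime_filter p \<and> height p < enat d}" if "p \<in> A" for p
    using lower[OF _ _ that] unfolding key_def by auto
  then have "key ` A \<subseteq> Pow S \<times> Pow {p. prime_filter p \<and> height p < enat d}"
    by (rule image_subsetI)
  then have "finite (key ` A)"
    by (rule finite_subset) (simp add: Suc.IH \<open>finite S\<close>)
  then show ?case
    using finite_imageD[OF _ inj] unfolding A_def by blast
qed

lemma mem_dideal_iff:
  "x \<in> dideal d \<longleftrightarrow> (\<forall>p. prime_filter p \<and> x \<in> p \<longrightarrow> enat d \<le> height p)"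
  unfolding dideal_def codim_def Spec_def le_Inf_iff by blast

lemma qrel_dideal_iff:
  assumes CH: "co_heyting TYPE('a::{bounded_lattice,distrib_lattice})"
  shows "((a::'a), b) \<in> qrel (dideal d) \<longleftrightarrow>
    (\<forall>p. prime_filter p \<and> height p < enat d \<longrightarrow> (a \<in> p \<longleftrightarrow> b \<in> p))"
proof -
  have "(a, b) \<in> qrel (dideal d) \<longleftrightarrow>
      (\<forall>p. prime_filter p \<and> sup (cdiff a b) (cdiff b a) \<in> p \<longrightarrow> enat d \<le> height p)"
    by (simp add: qrel_def mem_dideal_iff)
  also have "\<dots> \<longleftrightarrow>
      (\<forall>p. prime_filter p \<and> height p < enat d \<longrightarrow> cdiff a b \<notin> p \<and> cdiff b a \<notin> p)"
    by (meson not_le prime_filter_sup_iff)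
  also have "\<dots> \<longleftrightarrow> (\<forall>p. prime_filter p \<and> height p < enat d \<longrightarrow> (a \<in> p \<longleftrightarrow> b \<in> p))"
  proof (rule iffI; intro allI impI)
    fix p :: "'a set" assume "\<forall>p. prime_filter p \<and> height p < enat d \<longrightarrow> cdiff a b \<notin> p \<and> cdiff b a \<notin> p"
      and "prime_filter p \<and> height p < enat d"
    then show "a \<in> p \<longleftrightarrow> b \<in> p"
      using cdiff_mem_prime_filter_iff[OF CH] by blast
  next
    fix p :: "'a set" assume same: "\<forall>p. prime_filter p \<and> height p < enat d \<longrightarrow> (a \<in> p \<longleftrightarrow> b \<in> p)"
      and p: "prime_filter p \<and> height p < enat d"
    have "height q < enat d" if "prime_filter q" "q \<subseteq> p" for q
      using height_mono[OF _ that(2)] p by (blast intro: order_le_less_trans)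
    then show "cdiff a b \<notin> p \<and> cdiff b a \<notin> p"
      using same cdiff_mem_prime_filter_iff[OF CH] p by blast
  qed
  finally show ?thesis .
qed

lemma precompact_if_fin_gen:
  assumes CH: "co_heyting TYPE('a::{bounded_lattice,distrib_lattice})"
    and "fin_gen TYPE('a)"
  shows "precompact TYPE('a)"
  unfolding precompact_def
proof (intro allI impI)
  fix d :: nat
  obtain S :: "'a set" where "finite S" "gen S = UNIV"
    using \<open>fin_gen TYPE('a)\<close> unfolding fin_gen_def by blast
  define low where "low = {p::'a set. prime_filter p \<and> height p < enat d}"
  define trace where "trace x = {p\<in>low. x \<in> p}" for x :: 'a
  have "quot (dideal d :: 'a set) \<subseteq> (\<lambda>T. {x. trace x = T}) ` Pow low"
  proof
    fix C assume "C \<in> quot (dideal d :: 'a set)"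
    then obtain a where "C = qrel (dideal d) `` {a}"
      unfolding quot_def quotient_def by blast
    then have "C = {x. trace x = trace a}"
      unfolding trace_def low_def using qrel_dideal_iff[OF CH] by blast
    then show "C \<in> (\<lambda>T. {x. trace x = T}) ` Pow low"
      unfolding trace_def by blast
  qed
  moreover have "finite low"
    unfolding low_def by (rule finite_prime_filters_height_less) fact+
  ultimately show "finite (quot (dideal d :: 'a set))"
    by (meson finite_Pow_iff finite_imageI finite_subset)
qed

section \<open>Finite sublattices\<close>

inductive_set lat_hull :: "'a::bounded_lattice set \<Rightarrow> 'a set" for X where
  lat_hull_base: "x \<in> X \<Longrightarrow> x \<in> lat_hull X"
| lat_hull_bot: "bot \<in> lat_hull X"
| lat_hull_top: "top \<in> lat_hull X"
| lat_hull_sup: "x \<in> lat_hull X \<Longrightarrow> y \<in> lat_hull X \<Longrightarrow> sup x y \<in> lat_hull X"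
| lat_hull_inf: "x \<in> lat_hull X \<Longrightarrow> y \<in> lat_hull X \<Longrightarrow> inf x y \<in> lat_hull X"

lemma lat_hull_empty: "lat_hull ({}::'a::bounded_lattice set) \<subseteq> {bot, top}"
proof
  fix x :: 'a assume "x \<in> lat_hull {}"
  then show "x \<in> {bot, top}" by induction auto
qed

lemma lat_hull_insert:
  fixes x :: "'a::{bounded_lattice,distrib_lattice}"
  shows "lat_hull (insert x X) \<subseteq> (\<lambda>(u, v). sup u (inf x v)) ` (lat_hull X \<times> lat_hull X)"
proof
  fix y assume "y \<in> lat_hull (insert x X)"
  then have "\<exists>u\<in>lat_hull X. \<exists>v\<in>lat_hull X. y = sup u (inf x v)"
  proof induction
    case (lat_hull_base y)
    then consider "y = x" | "y \<in> X" by blast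
    then show ?case
    proof cases
      case 1
      then have "y = sup bot (inf x top)" by simp
      then show ?thesis using lat_hull.lat_hull_bot lat_hull.lat_hull_top by blast
    next
      case 2
      have "y = sup y (inf x bot)" by simp
      then show ?thesis using 2 lat_hull.lat_hull_base lat_hull.lat_hull_bot by blast
    qed
  next
    case lat_hull_bot
    have "bot = sup bot (inf x bot)" by simp
    then show ?case using lat_hull.lat_hull_bot by blast
  next
    case lat_hull_top
    have "top = sup top (inf x top)" by simp
    then show ?case using lat_hull.lat_hull_top by blast
  next
    case (lat_hull_sup y z)
    then obtain u1 v1 u2 v2 where uv: "u1 \<in> lat_hull X" "v1 \<in> lat_hull X" "y = sup u1 (inf x v1)"
      "u2 \<in> lat_hull X" "v2 \<in> lat_hull X" "z = sup u2 (inf x v2)" by blast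
    have "sup y z = sup (sup u1 u2) (inf x (sup v1 v2))"
      unfolding uv(3,6) by (simp add: inf_sup_distrib1 sup_aci)
    then show ?case using uv lat_hull.lat_hull_sup by blast
  next
    case (lat_hull_inf y z)
    then obtain u1 v1 u2 v2 where uv: "u1 \<in> lat_hull X" "v1 \<in> lat_hull X" "y = sup u1 (inf x v1)"
      "u2 \<in> lat_hull X" "v2 \<in> lat_hull X" "z = sup u2 (inf x v2)" by blast
    have "inf y z = sup (inf u1 u2) (inf x (sup (inf v1 u2) (sup (inf u1 v2) (inf v1 v2))))"
      unfolding uv(3,6)
      by (simp only: inf_sup_distrib1 inf_sup_distrib2) (simp add: inf_aci sup_aci)
    moreover have "sup (inf v1 u2) (sup (inf u1 v2) (inf v1 v2)) \<in> lat_hull X"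
      by (intro lat_hull.lat_hull_sup lat_hull.lat_hull_inf uv(1,2,4,5))
    moreover have "inf u1 u2 \<in> lat_hull X"
      using uv(1,4) by (rule lat_hull.lat_hull_inf)
    ultimately show ?case by blast
  qed
  then show "y \<in> (\<lambda>(u, v). sup u (inf x v)) ` (lat_hull X \<times> lat_hull X)" by auto
qed

lemma finite_lat_hull:
  "finite X \<Longrightarrow> finite (lat_hull (X::'a::{bounded_lattice,distrib_lattice} set))"
proof (induction rule: finite_induct)
  case empty
  then show ?case using lat_hull_empty finite_subset by blast
next
  case (insert x X)
  then show ?case using lat_hull_insert[of x X] finite_subset by blast
qed

text \<open>Only used for \<open>D = lat_hull X\<close> with \<open>X\<close> finite, where the least cover exists by
  finiteness and distributivity; for other \<open>D\<close> the description may fail and the value is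
  unspecified.\<close>

definition rel_cdiff :: "'a::{bounded_lattice,distrib_lattice} set \<Rightarrow> 'a \<Rightarrow> 'a \<Rightarrow> 'a" where
  "rel_cdiff D x y = (THE c. c \<in> D \<and> x \<le> sup y c \<and> (\<forall>c'\<in>D. x \<le> sup y c' \<longrightarrow> c \<le> c'))"

lemma ex_least_cover_lat_hull:
  fixes X :: "'a::{bounded_lattice,distrib_lattice} set"
  assumes "finite X" and x: "x \<in> lat_hull X"
  shows "\<exists>c\<in>lat_hull X. x \<le> sup y c \<and> (\<forall>c'\<in>lat_hull X. x \<le> sup y c' \<longrightarrow> c \<le> c')"
proof -
  define C where "C = {c \<in> lat_hull X. x \<le> sup y c}"
  have "finite C" unfolding C_def using finite_lat_hull[OF \<open>finite X\<close>] by simp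
  moreover have "x \<in> C" unfolding C_def using x by simp
  ultimately obtain m where m: "m \<in> C" "\<forall>c\<in>C. c \<le> m \<longrightarrow> m = c"
    using finite_has_minimal by blast
  have "m \<le> c'" if c': "c' \<in> lat_hull X" "x \<le> sup y c'" for c'
  proof -
    have "inf m c' \<in> C"
      using m(1) c' lat_hull_inf unfolding C_def by (auto simp: sup_inf_distrib1)
    then have "inf m c' = m" using m(2) by (metis inf_le1)
    then show ?thesis by (simp add: le_iff_inf)
  qed
  then show ?thesis using m(1) unfolding C_def by blast
qed

lemma
  assumes "finite X" "x \<in> lat_hull X"
  shows rel_cdiff_in_lat_hull: "rel_cdiff (lat_hull X) x y \<in> lat_hull X"
    and le_sup_rel_cdiff: "x \<le> sup y (rel_cdiff (lat_hull X) x y)"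
    and rel_cdiff_le: "c \<in> lat_hull X \<Longrightarrow> x \<le> sup y c \<Longrightarrow> rel_cdiff (lat_hull X) x y \<le> c"
proof -
  obtain c where c: "c \<in> lat_hull X" "x \<le> sup y c" "\<forall>c'\<in>lat_hull X. x \<le> sup y c' \<longrightarrow> c \<le> c'"
    using ex_least_cover_lat_hull[OF assms] by blast
  then have "rel_cdiff (lat_hull X) x y = c"
    unfolding rel_cdiff_def by (intro the_equality) (auto intro: order.antisym)
  with c show "rel_cdiff (lat_hull X) x y \<in> lat_hull X" "x \<le> sup y (rel_cdiff (lat_hull X) x y)"
    and "c' \<in> lat_hull X \<Longrightarrow> x \<le> sup y c' \<Longrightarrow> rel_cdiff (lat_hull X) x y \<le> c'" for c'
    by simp_all
qed

lemma rel_cdiff_self: "finite X \<Longrightarrow> x \<in> lat_hull X \<Longrightarrow> rel_cdiff (lat_hull X) x x = bot"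
  using rel_cdiff_le[where c = bot and y = x] by (simp add: lat_hull.lat_hull_bot bot_unique)

lemma sup_rel_cdiff:
  assumes "finite X" "x \<in> lat_hull X" "y \<in> lat_hull X"
  shows "sup x (rel_cdiff (lat_hull X) y x) = sup x y"
proof (rule order.antisym)
  show "sup x (rel_cdiff (lat_hull X) y x) \<le> sup x y"
    using rel_cdiff_le[OF assms(1,3) assms(3)] by (simp add: le_supI2)
  show "sup x y \<le> sup x (rel_cdiff (lat_hull X) y x)"
    using le_sup_rel_cdiff[OF assms(1,3)] by simp
qed

lemma sup_rel_cdiff_absorb:
  "finite X \<Longrightarrow> y \<in> lat_hull X \<Longrightarrow> sup y (rel_cdiff (lat_hull X) y x) = y"
  using rel_cdiff_le[of X y y x] by (simp add: sup.absorb1)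

lemma rel_cdiff_sup:
  assumes X: "finite X" and y: "y \<in> lat_hull X" and z: "z \<in> lat_hull X"
  shows "rel_cdiff (lat_hull X) (sup y z) x =
    sup (rel_cdiff (lat_hull X) y x) (rel_cdiff (lat_hull X) z x)"
    (is "?yz = sup ?y ?z")
proof (rule order.antisym)
  have yz: "sup y z \<in> lat_hull X" using y z by (rule lat_hull_sup)
  have "sup y z \<le> sup (sup x ?y) (sup x ?z)"
    using le_sup_rel_cdiff[OF X y, of x] le_sup_rel_cdiff[OF X z, of x] by (rule sup_mono)
  also have "\<dots> = sup x (sup ?y ?z)" by (simp add: sup_aci)
  finally have "sup y z \<le> sup x (sup ?y ?z)" .
  then show "?yz \<le> sup ?y ?z"
    by (intro rel_cdiff_le[OF X yz] lat_hull_sup rel_cdiff_in_lat_hull X y z)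
  have "y \<le> sup x ?yz" "z \<le> sup x ?yz"
    using le_sup_rel_cdiff[OF X yz, of x] by (simp_all add: le_supE)
  then show "sup ?y ?z \<le> ?yz"
    by (intro sup_least rel_cdiff_le[OF X y] rel_cdiff_le[OF X z] rel_cdiff_in_lat_hull X yz)
qed

section \<open>Finitely presented algebras are Hausdorff\<close>

primrec subterms :: "trm \<Rightarrow> trm set" where
  "subterms (Var v) = {Var v}"
| "subterms Zero = {Zero}"
| "subterms One = {One}"
| "subterms (Join s t) = insert (Join s t) (subterms s \<union> subterms t)"
| "subterms (Meet s t) = insert (Meet s t) (subterms s \<union> subterms t)"
| "subterms (Minus s t) = insert (Minus s t) (subterms s \<union> subterms t)"

lemma finite_subterms: "finite (subterms t)"
  by (induction t) auto

lemma subterms_refl: "t \<in> subterms t"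
  by (cases t) auto

primrec teval_in :: "'a::{bounded_lattice,distrib_lattice} set \<Rightarrow> (nat \<Rightarrow> 'a) \<Rightarrow> trm \<Rightarrow> 'a" where
  "teval_in D h (Var v) = h v"
| "teval_in D h Zero = bot"
| "teval_in D h One = top"
| "teval_in D h (Join s t) = sup (teval_in D h s) (teval_in D h t)"
| "teval_in D h (Meet s t) = inf (teval_in D h s) (teval_in D h t)"
| "teval_in D h (Minus s t) = rel_cdiff D (teval_in D h s) (teval_in D h t)"

lemma teval_in_lat_hull:
  assumes "finite X" "\<And>v. h v \<in> lat_hull X"
  shows "teval_in (lat_hull X) h t \<in> lat_hull X"
  by (induction t) (simp_all add: assms rel_cdiff_in_lat_hull lat_hull.intros)

lemma teval_in_deriv:
  assumes X: "finite X" and h: "\<And>v. h v \<in> lat_hull X"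
    and model: "\<forall>(s, t)\<in>R. teval_in (lat_hull X) h s = teval_in (lat_hull X) h t"
    and "deriv R s t"
  shows "teval_in (lat_hull X) h s = teval_in (lat_hull X) h t"
  using \<open>deriv R s t\<close>
proof induction
  case (d_rel s t)
  then show ?case using model by blast
next
  case (a_minus_self x)
  then show ?case by (simp add: rel_cdiff_self X teval_in_lat_hull h)
next
  case (a_minus1 x y)
  then show ?case by (simp add: sup_rel_cdiff X teval_in_lat_hull h)
next
  case (a_minus2 y x)
  then show ?case by (simp add: sup_rel_cdiff_absorb X teval_in_lat_hull h)
next
  case (a_minus3 y z x)
  then show ?case by (simp add: rel_cdiff_sup X teval_in_lat_hull h)
qed (simp_all add: ac_simps sup_inf_absorb inf_sup_absorb inf_sup_distrib1)

lemma teval_in_eq_teval: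
  assumes CH: "co_heyting TYPE('a::{bounded_lattice,distrib_lattice})"
    and X: "finite (X::'a set)"
    and vars: "\<And>v. v \<in> tvars t \<Longrightarrow> h v = g v"
    and in_hull: "\<And>u. u \<in> subterms t \<Longrightarrow> teval g u \<in> lat_hull X"
  shows "teval_in (lat_hull X) h t = teval g t"
  using vars in_hull
proof (induction t)
  case (Minus s t)
  then have s: "teval_in (lat_hull X) h s = teval g s" "teval g s \<in> lat_hull X"
    and t: "teval_in (lat_hull X) h t = teval g t"
    and st: "cdiff (teval g s) (teval g t) \<in> lat_hull X"
    using subterms_refl by force+
  have "rel_cdiff (lat_hull X) (teval g s) (teval g t) = cdiff (teval g s) (teval g t)"
  proof (rule order.antisym)
    show "rel_cdiff (lat_hull X) (teval g s) (teval g t) \<le> cdiff (teval g s) (teval g t)"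
      using rel_cdiff_le[OF X s(2) st] le_sup_cdiff[OF CH] by blast
    show "cdiff (teval g s) (teval g t) \<le> rel_cdiff (lat_hull X) (teval g s) (teval g t)"
      using cdiff_le[OF CH le_sup_rel_cdiff[OF X s(2)]] .
  qed
  then show ?case using s t by simp
qed simp_all

lemma gen_ex_term:
  "x \<in> gen (g ` {..<n}) \<Longrightarrow> \<exists>t. tvars t \<subseteq> {..<n} \<and> teval g t = x"
proof (induction rule: gen.induct)
  case (gen_base x)
  then obtain v where "v < n" "x = g v" by blast
  then show ?case by (intro exI[of _ "Var v"]) simp
next
  case gen_bot
  show ?case by (intro exI[of _ Zero]) simp
next
  case gen_top
  show ?case by (intro exI[of _ One]) simp
next
  case (gen_sup x y)
  then obtain s t where "tvars s \<subseteq> {..<n}" "teval g s = x" "tvars t \<subseteq> {..<n}" "teval g t = y"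
    by blast
  then show ?case by (intro exI[of _ "Join s t"]) simp
next
  case (gen_inf x y)
  then obtain s t where "tvars s \<subseteq> {..<n}" "teval g s = x" "tvars t \<subseteq> {..<n}" "teval g t = y"
    by blast
  then show ?case by (intro exI[of _ "Meet s t"]) simp
next
  case (gen_diff x y)
  then obtain s t where "tvars s \<subseteq> {..<n}" "teval g s = x" "tvars t \<subseteq> {..<n}" "teval g t = y"
    by blast
  then show ?case by (intro exI[of _ "Minus s t"]) simp
qed

lemma ex_hom_of_model:
  assumes X: "finite X" and h: "\<And>v. h v \<in> lat_hull X"
    and model: "\<forall>(s, t)\<in>R. teval_in (lat_hull X) h s = teval_in (lat_hull X) h t"
    and gens: "gen ((g::nat \<Rightarrow> 'a::{bounded_lattice,distrib_lattice}) ` {..<n}) = UNIV"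
    and complete: "\<forall>s t. tvars s \<subseteq> {..<n} \<longrightarrow> tvars t \<subseteq> {..<n} \<longrightarrow>
      teval g s = teval g t \<longrightarrow> deriv R s t"
  shows "\<exists>f. \<forall>t. tvars t \<subseteq> {..<n} \<longrightarrow> f (teval g t) = teval_in (lat_hull X) h t"
proof -
  define rep where "rep x = (SOME t. tvars t \<subseteq> {..<n} \<and> teval g t = x)" for x
  have "\<exists>t. tvars t \<subseteq> {..<n} \<and> teval g t = x" for x
    using gen_ex_term[of x g n] gens by simp
  then have rep: "tvars (rep x) \<subseteq> {..<n} \<and> teval g (rep x) = x" for x
    unfolding rep_def by (rule someI_ex)
  have "teval_in (lat_hull X) h (rep (teval g t)) = teval_in (lat_hull X) h t"
    if "tvars t \<subseteq> {..<n}" for t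
  proof (rule teval_in_deriv[OF X h model])
    show "deriv R (rep (teval g t)) t"
      using complete rep[of "teval g t"] that by blast
  qed
  then show ?thesis by (intro exI[of _ "\<lambda>x. teval_in (lat_hull X) h (rep x)"]) blast
qed

lemma induced_map_finite_hom:
  fixes g :: "nat \<Rightarrow> 'a::{bounded_lattice,distrib_lattice}"
    and f :: "'a \<Rightarrow> 'b::{bounded_lattice,distrib_lattice}"
  assumes X: "finite X" and h: "\<And>v. h v \<in> lat_hull X"
    and terms: "\<And>x. \<exists>t. tvars t \<subseteq> {..<n} \<and> teval g t = x"
    and f: "\<And>t. tvars t \<subseteq> {..<n} \<Longrightarrow> f (teval g t) = teval_in (lat_hull X) h t"
  shows "finite (range f) \<and> f bot = bot \<and> (\<forall>x y. f (sup x y) = sup (f x) (f y)) \<and>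
    (\<forall>x y. f x = f y \<longrightarrow> f (cdiff x y) = bot)"
proof -
  have f_hull: "f x \<in> lat_hull X" for x
  proof -
    obtain t where "tvars t \<subseteq> {..<n}" "teval g t = x" using terms by blast
    then show ?thesis using f[of t] teval_in_lat_hull[where h = h, OF X h, of t] by simp
  qed
  then have "range f \<subseteq> lat_hull X" by blast
  then have "finite (range f)" by (rule finite_subset[OF _ finite_lat_hull[OF X]])
  moreover have "f bot = bot" using f[of Zero] by simp
  moreover have "f (sup x y) = sup (f x) (f y)" for x y
    using terms[of x] terms[of y] f[of "Join _ _"] f by fastforce
  moreover have "f (cdiff x y) = bot" if "f x = f y" for x y
  proof -
    obtain s t where "tvars s \<subseteq> {..<n}" "teval g s = x" "tvars t \<subseteq> {..<n}" "teval g t = y"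
      using terms by blast
    then have "f (cdiff x y) = rel_cdiff (lat_hull X) (f x) (f y)"
      using f[of "Minus s t"] f[of s] f[of t] by simp
    then show ?thesis using that rel_cdiff_self[OF X f_hull] by simp
  qed
  ultimately show ?thesis by blast
qed

text \<open>The finite sublattice used is spanned by the values of all subterms of the relations and
  of a term for \<open>a\<close>; on these the relative difference agrees with the true one, so the
  relations survive and \<open>a\<close> is fixed.\<close>

lemma fin_pres_ex_finite_hom:
  assumes CH: "co_heyting TYPE('a::{bounded_lattice,distrib_lattice})"
    and "fin_pres TYPE('a)"
  shows "\<exists>f::'a \<Rightarrow> 'a. finite (range f) \<and> f bot = bot \<and> (\<forall>x y. f (sup x y) = sup (f x) (f y)) \<and>
    (\<forall>x y. f x = f y \<longrightarrow> f (cdiff x y) = bot) \<and> f a = a"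
proof -
  obtain n and g :: "nat \<Rightarrow> 'a" and R where
    R: "finite R" "\<forall>(s, t) \<in> R. tvars s \<union> tvars t \<subseteq> {..<n}" "\<forall>(s, t) \<in> R. teval g s = teval g t"
    and gens: "gen (g ` {..<n}) = UNIV"
    and complete: "\<forall>s t. tvars s \<subseteq> {..<n} \<longrightarrow> tvars t \<subseteq> {..<n} \<longrightarrow>
      teval g s = teval g t \<longrightarrow> deriv R s t"
    using \<open>fin_pres TYPE('a)\<close> unfolding fin_pres_def by blast
  have terms: "\<exists>t. tvars t \<subseteq> {..<n} \<and> teval g t = x" for x
    using gen_ex_term[of x g n] gens by simp
  then obtain ta where ta: "tvars ta \<subseteq> {..<n}" "teval g ta = a" by blast
  define U where "U = (\<Union>(s, t)\<in>R. subterms s \<union> subterms t) \<union> subterms ta \<union> Var ` {..<n}"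
  define X where "X = teval g ` U"
  define h where "h v = (if v < n then g v else bot)" for v
  have X: "finite X"
    unfolding X_def U_def using R(1) by (simp add: finite_subterms split_def)
  have "g v \<in> X" if "v < n" for v
    unfolding X_def U_def using that by (intro image_eqI[where x = "Var v"]) auto
  then have h: "h v \<in> lat_hull X" for v
    by (auto simp: h_def intro: lat_hull.intros)
  have agree: "teval_in (lat_hull X) h t = teval g t" if "subterms t \<subseteq> U" "tvars t \<subseteq> {..<n}" for t
    using that by (intro teval_in_eq_teval[OF CH X]) (auto simp: h_def X_def intro: lat_hull_base)
  have "\<forall>(s, t)\<in>R. teval_in (lat_hull X) h s = teval_in (lat_hull X) h t"
  proof (clarify)
    fix s t assume "(s, t) \<in> R"
    moreover have "subterms s \<subseteq> U" "subterms t \<subseteq> U"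
      unfolding U_def using \<open>(s, t) \<in> R\<close> by auto
    ultimately show "teval_in (lat_hull X) h s = teval_in (lat_hull X) h t"
      using agree R(2,3) by fastforce
  qed
  then obtain f where f: "\<And>t. tvars t \<subseteq> {..<n} \<Longrightarrow> f (teval g t) = teval_in (lat_hull X) h t"
    using ex_hom_of_model[where h = h, OF X h _ gens complete] by blast
  then have "finite (range f) \<and> f bot = bot \<and> (\<forall>x y. f (sup x y) = sup (f x) (f y)) \<and>
      (\<forall>x y. f x = f y \<longrightarrow> f (cdiff x y) = bot)"
    using induced_map_finite_hom[where h = h, OF X h terms] by blast
  moreover have "f a = a"
    using f[OF ta(1)] agree[OF _ ta(1)] ta(2) unfolding U_def by auto
  ultimately show ?thesis by blast
qed

lemma prime_filter_saturated:
  assumes CH: "co_heyting TYPE('a::{bounded_lattice,distrib_lattice})"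
    and diff: "\<And>x y::'a. f x = f y \<Longrightarrow> f (cdiff x y) = bot"
    and q: "prime_filter q" "\<And>x. x \<in> q \<Longrightarrow> f x \<noteq> bot"
    and "x \<in> q" "f x = f y"
  shows "y \<in> q"
proof -
  have "cdiff x y \<notin> q" using diff[OF \<open>f x = f y\<close>] q(2) by blast
  moreover have "sup y (cdiff x y) \<in> q"
    using prime_filter_up[OF q(1) \<open>x \<in> q\<close> le_sup_cdiff[OF CH]] .
  ultimately show ?thesis using prime_filter_sup_iff[OF q(1)] by blast
qed

text \<open>Taking images under \<open>f\<close> is injective on a strict chain of prime filters below \<open>p\<close>,
  since these are saturated for the fibres of \<open>f\<close>.\<close>

lemma height_le_of_finite_hom:
  fixes f :: "'a::{bounded_lattice,distrib_lattice} \<Rightarrow> 'b::bot"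
  assumes CH: "co_heyting TYPE('a)" and fin: "finite (range f)"
    and diff: "\<And>x y. f x = f y \<Longrightarrow> f (cdiff x y) = bot"
    and p: "prime_filter p" and ker: "\<And>x. x \<in> p \<Longrightarrow> f x \<noteq> bot"
  shows "height p \<le> enat (2 ^ card (range f))"
proof -
  have "k \<le> 2 ^ card (range f)" if k: "k \<in> chain_lengths p" for k
  proof -
    obtain c where c: "c k = p" "\<forall>i\<le>k. c i \<in> Spec" "\<forall>i<k. c i \<subset> c (Suc i)"
      using k unfolding chain_lengths_def by blast
    have below_p: "c i \<subseteq> p" if "i \<le> k" for i
      using psubset_of_chain[OF c(3), of i k] that c(1) by (cases "i = k") auto
    have "inj_on (\<lambda>i. f ` c i) {..k}"
    proof (rule linorder_inj_onI')
      fix i j assume "i \<in> {..k}" "j \<in> {..k}" "i < j"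
      then have "c i \<subset> c j" using psubset_of_chain[OF c(3)] by simp
      then obtain y where y: "y \<in> c j" "y \<notin> c i" by blast
      have ci: "prime_filter (c i)" "\<And>x. x \<in> c i \<Longrightarrow> f x \<noteq> bot"
        using c(2) below_p ker \<open>i \<in> {..k}\<close> by (auto simp: Spec_def)
      have "f y \<notin> f ` c i"
      proof
        assume "f y \<in> f ` c i"
        then obtain x where "x \<in> c i" "f x = f y" by auto
        then have "y \<in> c i" using prime_filter_saturated[OF CH, of f "c i" x y] diff ci by blast
        then show False using y(2) by contradiction
      qed
      then show "f ` c i \<noteq> f ` c j" using y(1) by blast
    qed
    moreover have "(\<lambda>i. f ` c i) ` {..k} \<subseteq> Pow (range f)" by blast
    ultimately have "card {..k} \<le> card (Pow (range f))"
      using fin by (intro card_inj_on_le) auto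
    then show ?thesis using fin by (simp add: card_Pow)
  qed
  then show ?thesis by (simp add: height_le_enat_iff)
qed

lemma hausdorff_if_fin_pres:
  assumes CH: "co_heyting TYPE('a::{bounded_lattice,distrib_lattice})"
    and "fin_pres TYPE('a)"
  shows "hausdorff TYPE('a)"
  unfolding hausdorff_def
proof (intro allI impI)
  fix a :: 'a assume "a \<noteq> bot"
  obtain f :: "'a \<Rightarrow> 'a" where f: "finite (range f)" "f bot = bot"
    "\<And>x y. f (sup x y) = sup (f x) (f y)" "\<And>x y. f x = f y \<Longrightarrow> f (cdiff x y) = bot" "f a = a"
    using fin_pres_ex_finite_hom[OF assms] by blast
  have "{x. a \<le> x} \<inter> {x. f x = bot} = {}"
  proof -
    have "f x \<noteq> bot" if "a \<le> x" for x
      using sup_hom_mono[of f, OF f(3) that] f(5) \<open>a \<noteq> bot\<close> by (auto simp: bot_unique)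
    then show ?thesis by blast
  qed
  then obtain p where p: "prime_filter p" "a \<in> p" "p \<inter> {x. f x = bot} = {}"
    using prime_filter_separation[OF lattice_filter_principal lattice_ideal_kernel[OF f(2,3)]]
    by blast
  have "codim a \<le> height p"
    unfolding codim_def Spec_def using p(1,2) by (auto intro: Inf_lower)
  also have "\<dots> \<le> enat (2 ^ card (range f))"
    using p by (intro height_le_of_finite_hom[OF CH f(1,4)]) auto
  finally show "codim a \<noteq> \<infinity>" by (metis infinity_ileE)
qed

lemma fin_gen_if_fin_pres: "fin_pres TYPE('a::{bounded_lattice,distrib_lattice}) \<Longrightarrow> fin_gen TYPE('a)"
  unfolding fin_pres_def fin_gen_def by blast

theorem corollary5p5:
  assumes "co_heyting TYPE('a::{bounded_lattice,distrib_lattice})"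
  shows "(fin_gen TYPE('a) \<longrightarrow> precompact TYPE('a)) \<and>
         (fin_pres TYPE('a) \<longrightarrow> precompact TYPE('a) \<and> hausdorff TYPE('a))"
  using precompact_if_fin_gen[OF assms] hausdorff_if_fin_pres[OF assms] fin_gen_if_fin_pres
  by blast

end
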